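(* For every integer $n\ge1$ and all $u,x,y,z\in\mathbb{C}((t^{1/n}))$ satisfying $x^2-tu^2+t=(u^2t^2-t)y^2\neq0$ and $x^2-2tu^2+t^{-1}=t(u^2t^2-t)z^2\neq0$, the element $u^2t^2-t$ is a square in $\mathbb{C}((t^{1/n}))$. *)

theory Defs
  imports "HOL-Computational_Algebra.Formal_Laurent_Series"
begin

text \<open>The field C((t^(1/n))) is modelled as complex formal Laurent series in the
variable s = t^(1/n) (fls_X); the element t is then s^n.\<close>

definition tpar :: "nat \<Rightarrow> complex fls" where
  "tpar n = fls_X ^ n"

end

theory Submission
  imports Defs
begin

text \<open>Write v for the valuation fls_subdegree, T for t and put a = T u^2, so that
D = u^2 T^2 - T = T (a - 1). As C is algebraically closed of characteristic 0, a Laurent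
series is a square as soon as its valuation is even, so it suffices to rule out odd v D.
Both equations are played off against the ultrametric rule v (f + g) = min (v f) (v g) for
v f \<noteq> v g, which applies whenever the summands have valuations of different parity.
If v T is even, the first equation forces v a = 0 and v x \<ge> 0, and then the two sides of
the second equation have valuations of different parity. If v T is odd, then a = 0 or
v a > 0, the second equation forces 2 v x < - v T, and then the first equation gives
v (a - T) < 0 although v (a - T) > 0.\<close>

lemma fls_square_if_even_subdegree:
  fixes f :: "complex fls"
  assumes "even (fls_subdegree f)"
  shows "\<exists>w. w^2 = f"
proof (cases "f = 0")
  case False
  obtain m where m: "fls_subdegree f = 2 * m"
    using assms by (elim evenE)
  define g where "g = fls_base_factor_to_fps f"
  have "g $ 0 \<noteq> 0"
    using False unfolding g_def by simp
  define r where "r = fps_radical (\<lambda>_ c. csqrt c) (Suc 1) g"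
  have "r ^ 2 = g"
    using power_radical[OF \<open>g $ 0 \<noteq> 0\<close>, of "\<lambda>_ c. csqrt c" 1]
    unfolding r_def Suc_1 by simp
  have "(fls_shift (- m) (fps_to_fls r))^2 = fls_shift (- fls_subdegree f) (fps_to_fls (r^2))"
    by (simp add: m power2_eq_square fls_times_both_shifted_simp fls_times_fps_to_fls)
  also have "\<dots> = f"
    using \<open>r ^ 2 = g\<close> fls_conv_base_factor_to_fps_shift_subdegree[of f]
    unfolding g_def by simp
  finally show ?thesis by blast
qed auto

lemma fls_add_nonzero_if_subdegree_neq:
  fixes f g :: "'a::group_add fls"
  assumes "fls_subdegree f \<noteq> fls_subdegree g"
  shows "f + g \<noteq> 0"
proof
  assume "f + g = 0"
  then have "f = - g" by (simp add: eq_neg_iff_add_eq_0)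
  then show False using assms by simp
qed

lemma fls_subdegree_add_neq:
  fixes f g :: "'a::group_add fls"
  assumes "f \<noteq> 0" "g \<noteq> 0" "fls_subdegree f \<noteq> fls_subdegree g"
  shows "fls_subdegree (f + g) = min (fls_subdegree f) (fls_subdegree g)"
  using assms fls_subdegree_add_eq1[of f g] fls_subdegree_add_eq2[of g f]
  by (cases "fls_subdegree f < fls_subdegree g") auto

lemma fls_subdegree_diff_neq:
  fixes f g :: "'a::group_add fls"
  assumes "f \<noteq> 0" "g \<noteq> 0" "fls_subdegree f \<noteq> fls_subdegree g"
  shows "fls_subdegree (f - g) = min (fls_subdegree f) (fls_subdegree g)"
  using assms fls_subdegree_add_neq[of f "- g"] by simp

lemma fls_subdegree_diff_one:
  fixes f :: "'a::ring_1 fls"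
  assumes "f \<noteq> 0" "fls_subdegree f \<noteq> 0"
  shows "fls_subdegree (f - 1) = min (fls_subdegree f) 0"
  using assms fls_subdegree_diff_neq[of f 1] by simp

lemma fls_subdegree_two_mult:
  fixes f :: "'a::{idom, ring_char_0} fls"
  shows "fls_subdegree (2 * f) = fls_subdegree f"
  by (cases "f = 0") simp_all

lemma fls_subdegree_square:
  fixes f :: "'a::semiring_1_no_zero_divisors fls"
  shows "fls_subdegree (f^2) = 2 * fls_subdegree f"
  by (simp add: fls_subdegree_pow)

locale quadratic_pair =
  fixes T u a D x y z :: "complex fls"
  assumes T_pos: "fls_subdegree T > 0"
    and a_eq: "a = T * u^2"
    and D_eq: "D = T * (a - 1)"
    and eq_y: "x^2 - D * y^2 = a - T"
    and eq_z: "x^2 - 2 * a + inverse T = T * D * z^2"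
    and D_nz: "D \<noteq> 0" and y_nz: "y \<noteq> 0" and z_nz: "z \<noteq> 0"
begin

lemma T_nz: "T \<noteq> 0"
  using T_pos by auto

lemma subdegree_D: "fls_subdegree D = fls_subdegree T + fls_subdegree (a - 1)"
  using D_eq D_nz T_nz by auto

lemma even_subdegree_a_iff:
  "a \<noteq> 0 \<Longrightarrow> even (fls_subdegree a) \<longleftrightarrow> even (fls_subdegree T)"
  using a_eq by (auto simp: fls_subdegree_square)

lemma subdegree_D_y2: "fls_subdegree (D * y^2) = fls_subdegree D + 2 * fls_subdegree y"
  using D_nz y_nz by (simp add: fls_subdegree_square)

lemma subdegree_T_D_z2:
  "fls_subdegree (T * D * z^2) = fls_subdegree T + fls_subdegree D + 2 * fls_subdegree z"
  using T_nz D_nz z_nz by (simp add: fls_subdegree_square)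

lemma even_subdegree_D_if_even_T:
  assumes "even (fls_subdegree T)"
  shows "even (fls_subdegree D)"
proof (rule ccontr)
  assume odd_D: "odd (fls_subdegree D)"
  then have odd_a1: "odd (fls_subdegree (a - 1))"
    using assms subdegree_D by simp
  then have "a \<noteq> 0" by auto
  have a_unit: "fls_subdegree a = 0"
  proof (rule ccontr)
    assume "fls_subdegree a \<noteq> 0"
    then have "fls_subdegree (a - 1) = min (fls_subdegree a) 0"
      using fls_subdegree_diff_one \<open>a \<noteq> 0\<close> by blast
    then show False
      using odd_a1 even_subdegree_a_iff \<open>a \<noteq> 0\<close> assms
      by (simp add: min_def split: if_splits)
  qed
  have "fls_subdegree (a - T) = 0"
    using fls_subdegree_diff_eq1[OF \<open>a \<noteq> 0\<close>] a_unit T_pos by simp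
  have "fls_subdegree (x^2) \<ge> 0"
  proof (cases "x = 0")
    case False
    have "fls_subdegree (x^2) \<noteq> fls_subdegree (D * y^2)"
      using fls_subdegree_square[of x] subdegree_D_y2 odd_D by presburger
    then have "fls_subdegree (a - T) = min (fls_subdegree (x^2)) (fls_subdegree (D * y^2))"
      using fls_subdegree_diff_neq[of "x^2" "D * y^2"] False D_nz y_nz eq_y by simp
    then show ?thesis
      using \<open>fls_subdegree (a - T) = 0\<close> by simp
  qed simp
  have "fls_subdegree (x^2 - 2 * a + inverse T) = - fls_subdegree T"
  proof (cases "x^2 - 2 * a = 0")
    case False
    have "fls_subdegree (x^2 - 2 * a) \<ge> 0"
      using fls_subdegree_minus[OF False] \<open>fls_subdegree (x^2) \<ge> 0\<close>
        fls_subdegree_two_mult[of a] a_unit by simp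
    then show ?thesis
      using fls_subdegree_add_eq2[of "inverse T" "x^2 - 2 * a"] T_nz T_pos by simp
  qed simp
  then have "- fls_subdegree T = fls_subdegree T + fls_subdegree D + 2 * fls_subdegree z"
    using eq_z subdegree_T_D_z2 by simp
  then show False
    using odd_D assms by presburger
qed

lemma even_subdegree_D_if_odd_T:
  assumes "odd (fls_subdegree T)"
  shows "even (fls_subdegree D)"
proof (rule ccontr)
  assume odd_D: "odd (fls_subdegree D)"
  then have even_a1: "even (fls_subdegree (a - 1))"
    using assms subdegree_D by simp
  have a_small: "a = 0 \<or> fls_subdegree a > 0"
  proof (rule ccontr)
    assume "\<not> (a = 0 \<or> fls_subdegree a > 0)"
    then have "a \<noteq> 0" "fls_subdegree a \<le> 0" by auto
    moreover from this have "odd (fls_subdegree a)"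
      using even_subdegree_a_iff assms by simp
    ultimately show False
      using fls_subdegree_diff_one[of a] even_a1
      by (cases "fls_subdegree a = 0") (auto simp: min_def)
  qed
  then have "fls_subdegree (a - 1) = 0"
    using fls_subdegree_diff_one[of a] by (cases "a = 0") (auto simp: min_def)
  then have D_T: "fls_subdegree D = fls_subdegree T"
    using subdegree_D by simp
  have a_T: "a - T = 0 \<or> fls_subdegree (a - T) > 0"
    using a_small fls_subdegree_minus[of a T] T_pos by force
  define h where "h = inverse T - 2 * a"
  have h_nz: "h \<noteq> 0" and subdegree_h: "fls_subdegree h = - fls_subdegree T"
    using a_small fls_subdegree_diff_eq1[of "inverse T" "2 * a"] T_nz T_pos
      fls_subdegree_two_mult[of a]
    unfolding h_def by auto
  have "x^2 + h = T * D * z^2"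
    using eq_z unfolding h_def by (simp add: algebra_simps)
  then have "fls_subdegree (x^2 + h) = 2 * fls_subdegree T + 2 * fls_subdegree z"
    using subdegree_T_D_z2 D_T by simp
  then have "x \<noteq> 0"
    using subdegree_h assms by (auto, presburger)
  have "fls_subdegree (x^2) \<noteq> fls_subdegree h"
    using fls_subdegree_square[of x] subdegree_h assms by presburger
  then have "min (2 * fls_subdegree x) (- fls_subdegree T)
      = 2 * fls_subdegree T + 2 * fls_subdegree z"
    using fls_subdegree_add_neq[of "x^2" h] \<open>x \<noteq> 0\<close> h_nz subdegree_h
      fls_subdegree_square[of x] \<open>fls_subdegree (x^2 + h) = _\<close> by simp
  then have x_neg: "2 * fls_subdegree x < - fls_subdegree T"
    using assms
    by (cases "2 * fls_subdegree x < - fls_subdegree T") (auto simp: min_def, presburger)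
  have "fls_subdegree (x^2) \<noteq> fls_subdegree (D * y^2)"
    using fls_subdegree_square[of x] subdegree_D_y2 D_T assms by presburger
  then have "fls_subdegree (a - T) = min (2 * fls_subdegree x) (fls_subdegree (D * y^2))"
      and "a - T \<noteq> 0"
    using fls_subdegree_diff_neq[of "x^2" "D * y^2"]
      fls_add_nonzero_if_subdegree_neq[of "x^2" "- (D * y^2)"] \<open>x \<noteq> 0\<close>
      D_nz y_nz eq_y fls_subdegree_square[of x]
    by simp_all
  then show False
    using a_T x_neg T_pos by linarith
qed

lemma even_subdegree_D: "even (fls_subdegree D)"
  using even_subdegree_D_if_even_T even_subdegree_D_if_odd_T by blast

end

theorem lemma9p1:
  fixes n :: nat and u x y z :: "complex fls"
  assumes "n \<ge> 1"
    and "x^2 - tpar n * u^2 + tpar n = (u^2 * (tpar n)^2 - tpar n) * y^2"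
    and "(u^2 * (tpar n)^2 - tpar n) * y^2 \<noteq> 0"
    and "x^2 - 2 * tpar n * u^2 + inverse (tpar n) = tpar n * (u^2 * (tpar n)^2 - tpar n) * z^2"
    and "tpar n * (u^2 * (tpar n)^2 - tpar n) * z^2 \<noteq> 0"
  shows "\<exists>w :: complex fls. w^2 = u^2 * (tpar n)^2 - tpar n"
proof -
  define T where "T = tpar n"
  define a where "a = T * u^2"
  define D where "D = T * (a - 1)"
  have D_alt: "D = u^2 * T^2 - T"
    unfolding D_def a_def by algebra
  have "quadratic_pair T u a D x y z"
  proof
    show "fls_subdegree T > 0"
      using assms(1) unfolding T_def tpar_def by simp
    show "x^2 - D * y^2 = a - T"
      using assms(2) unfolding T_def a_def D_def by algebra
    show "x^2 - 2 * a + inverse T = T * D * z^2"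
      using assms(4) unfolding T_def a_def D_def by algebra
    show "D \<noteq> 0" "y \<noteq> 0" "z \<noteq> 0"
      using assms(3,5) unfolding D_alt T_def by auto
  qed (simp_all add: a_def D_def)
  then have "even (fls_subdegree D)"
    by (rule quadratic_pair.even_subdegree_D)
  then show ?thesis
    using fls_square_if_even_subdegree D_alt unfolding T_def by simp
qed

end
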